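(* Let $P=\{S_1,\ldots,S_n\}$ be a homothetic packing of $n$ squares with contact graph $G=([n],E)$. If $\{i,j,k\}$ is a clique in $G$, then $S_i\cap S_j\cap S_k$ consists of exactly one point.
   Context: Let $S=\{(x,y): -1\le x,y\le 1\}$. A homothetic packing of $n$ squares is a set $P=\{S_1,\ldots,S_n\}$ with $S_i=r_iS+p_i$, $r_i>0$, $p_i\in\mathbb{R}^2$, such that distinct squares have disjoint interiors. Its contact graph is $G=([n],E)$ where $\{i,j\}\in E$ iff $i\neq j$ and $S_i\cap S_j\neq\emptyset$. *)

theory Defs
  imports "HOL-Analysis.Analysis"
begin

definition std_square :: "(real \<times> real) set" where
  "std_square = {(x, y). -1 \<le> x \<and> x \<le> 1 \<and> -1 \<le> y \<and> y \<le> 1}"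

definition hsquare :: "real \<Rightarrow> real \<times> real \<Rightarrow> (real \<times> real) set" where
  "hsquare r p = (\<lambda>q. r *\<^sub>R q + p) ` std_square"

definition homothetic_packing :: "nat \<Rightarrow> (nat \<Rightarrow> real) \<Rightarrow> (nat \<Rightarrow> real \<times> real) \<Rightarrow> bool" where
  "homothetic_packing n r p \<longleftrightarrow>
     (\<forall>i\<in>{1..n}. r i > 0) \<and>
     (\<forall>i\<in>{1..n}. \<forall>j\<in>{1..n}. i \<noteq> j \<longrightarrow>
        interior (hsquare (r i) (p i)) \<inter> interior (hsquare (r j) (p j)) = {})"

definition contact_edge :: "nat \<Rightarrow> (nat \<Rightarrow> real) \<Rightarrow> (nat \<Rightarrow> real \<times> real) \<Rightarrow> nat \<Rightarrow> nat \<Rightarrow> bool" where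
  "contact_edge n r p i j \<longleftrightarrow> i \<in> {1..n} \<and> j \<in> {1..n} \<and> i \<noteq> j \<and>
     hsquare (r i) (p i) \<inter> hsquare (r j) (p j) \<noteq> {}"

end

theory Submission
  imports Defs
begin

text \<open>
  A homothetic square is the product of two closed intervals, so two packed squares have disjoint
  open projections to one of the two axes, while touching squares have meeting closed projections
  on both axes. A common point of a clique therefore exists by the one-dimensional Helly property
  in each coordinate. If two common points differed in the first coordinate, the open first
  projections would meet pairwise, forcing the open second projections to be pairwise disjoint;
  but a point lies in at most two nondegenerate closed intervals with pairwise disjoint interiors,
  whereas the second coordinate of a common point lies in all of them.
\<close>

lemma hsquare_eq_Times:
  assumes "r \<ge> 0"
  shows "hsquare r p = {fst p - r..fst p + r} \<times> {snd p - r..snd p + r}"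
proof -
  have "std_square = cbox (-1, -1) (1, 1)"
    by (auto simp: std_square_def cbox_Pair_eq)
  then have "hsquare r p = (\<lambda>q. r *\<^sub>R q + p) ` cbox (-1, -1) (1, 1)"
    by (simp only: hsquare_def)
  also have "\<dots> = cbox (r *\<^sub>R (-1, -1) + p) (r *\<^sub>R (1, 1) + p)"
    using assms by (subst image_affinity_cbox) (auto simp: cbox_Pair_eq)
  finally show ?thesis
    by (cases p) (simp add: cbox_Pair_eq add.commute)
qed

lemma Max_in_Inter_atLeastAtMost:
  fixes a b :: "'i \<Rightarrow> 'a::linorder"
  assumes "finite K" "K \<noteq> {}"
    and meet: "\<And>l m. l \<in> K \<Longrightarrow> m \<in> K \<Longrightarrow> {a l..b l} \<inter> {a m..b m} \<noteq> {}"
  shows "Max (a ` K) \<in> (\<Inter>l\<in>K. {a l..b l})"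
proof
  fix l assume "l \<in> K"
  have "Max (a ` K) \<in> a ` K"
    using assms(1,2) by simp
  then obtain m where "m \<in> K" and Max_eq: "Max (a ` K) = a m"
    by blast
  obtain t where "t \<in> {a l..b l}" "t \<in> {a m..b m}"
    using meet[OF \<open>l \<in> K\<close> \<open>m \<in> K\<close>] by blast
  then have "a m \<le> b l"
    by (meson atLeastAtMost_iff order.trans)
  moreover have "a l \<le> Max (a ` K)"
    using assms(1) \<open>l \<in> K\<close> by simp
  ultimately show "Max (a ` K) \<in> {a l..b l}"
    unfolding Max_eq by simp
qed

lemma greaterThanLessThan_meet_if_two_common_points:
  fixes x y :: "'a::dense_linorder"
  assumes "x \<noteq> y" "x \<in> {a..b} \<inter> {c..d}" "y \<in> {a..b} \<inter> {c..d}"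
  shows "{a<..<b} \<inter> {c<..<d} \<noteq> {}"
proof -
  have "min x y < max x y"
    using assms(1) by (auto simp: min_def max_def)
  then obtain t where t: "min x y < t" "t < max x y"
    using dense by blast
  have "a \<le> min x y" "c \<le> min x y" "max x y \<le> b" "max x y \<le> d"
    using assms(2,3) by auto
  with t have "a < t" "c < t" "t < b" "t < d"
    by (meson order.strict_trans1 order.strict_trans2)+
  then have "t \<in> {a<..<b} \<inter> {c<..<d}"
    by simp
  then show ?thesis
    by blast
qed

lemma card_le_1_if_subsingleton:
  assumes "\<And>x y. x \<in> A \<Longrightarrow> y \<in> A \<Longrightarrow> x = y"
  shows "card A \<le> 1"
proof (cases "A = {}")
  case False
  then obtain x where "x \<in> A"
    by blast
  with assms have "A = {x}"
    by blast
  then show ?thesis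
    by simp
qed simp

lemma card_atLeastAtMost_containing_le_2:
  fixes a b :: "'i \<Rightarrow> 'a::dense_linorder"
  assumes nondegenerate: "\<And>l. l \<in> K \<Longrightarrow> a l < b l"
    and disjoint: "pairwise (\<lambda>l m. {a l<..<b l} \<inter> {a m<..<b m} = {}) K"
  shows "card {l \<in> K. y \<in> {a l..b l}} \<le> 2"
proof -
  have overlap: "l = m" if "l \<in> K" "m \<in> K" "t \<in> {a l<..<b l} \<inter> {a m<..<b m}" for l m t
    using pairwiseD(1)[OF disjoint that(1,2)] that(3) by blast
  have right: "card {l \<in> K. a l \<le> y \<and> y < b l} \<le> 1"
  proof (rule card_le_1_if_subsingleton)
    fix l m assume l: "l \<in> {l \<in> K. a l \<le> y \<and> y < b l}" and m: "m \<in> {l \<in> K. a l \<le> y \<and> y < b l}"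
    then have "y < min (b l) (b m)"
      by simp
    then obtain t where "y < t" "t < min (b l) (b m)"
      using dense by blast
    with l m show "l = m"
      by (intro overlap[of l m t]) auto
  qed
  have left: "card {l \<in> K. a l < y \<and> y \<le> b l} \<le> 1"
  proof (rule card_le_1_if_subsingleton)
    fix l m assume l: "l \<in> {l \<in> K. a l < y \<and> y \<le> b l}" and m: "m \<in> {l \<in> K. a l < y \<and> y \<le> b l}"
    then have "max (a l) (a m) < y"
      by simp
    then obtain t where "max (a l) (a m) < t" "t < y"
      using dense by blast
    with l m show "l = m"
      by (intro overlap[of l m t]) auto
  qed
  have "{l \<in> K. y \<in> {a l..b l}} = {l \<in> K. a l \<le> y \<and> y < b l} \<union> {l \<in> K. a l < y \<and> y \<le> b l}"
    using nondegenerate by (auto simp: order.order_iff_strict)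
  then have "card {l \<in> K. y \<in> {a l..b l}} \<le> card {l \<in> K. a l \<le> y \<and> y < b l} + card {l \<in> K. a l < y \<and> y \<le> b l}"
    by (simp add: card_Un_le)
  with right left show ?thesis
    by linarith
qed

lemma card_le_2_if_common_points_differ_in_fst:
  fixes a b c d :: "'i \<Rightarrow> 'a::dense_linorder"
  assumes nondegenerate: "\<And>l. l \<in> K \<Longrightarrow> c l < d l"
    and packed: "pairwise (\<lambda>l m. {a l<..<b l} \<inter> {a m<..<b m} = {} \<or> {c l<..<d l} \<inter> {c m<..<d m} = {}) K"
    and u: "u \<in> (\<Inter>l\<in>K. {a l..b l} \<times> {c l..d l})"
    and v: "v \<in> (\<Inter>l\<in>K. {a l..b l} \<times> {c l..d l})"
    and "fst u \<noteq> fst v"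
  shows "card K \<le> 2"
proof -
  have disjoint: "pairwise (\<lambda>l m. {c l<..<d l} \<inter> {c m<..<d m} = {}) K"
  proof (rule pairwiseI)
    fix l m assume "l \<in> K" "m \<in> K" "l \<noteq> m"
    have "{a l<..<b l} \<inter> {a m<..<b m} \<noteq> {}"
      using \<open>fst u \<noteq> fst v\<close> u v \<open>l \<in> K\<close> \<open>m \<in> K\<close>
      by (intro greaterThanLessThan_meet_if_two_common_points[of "fst u" "fst v"]) (auto simp: mem_Times_iff)
    then show "{c l<..<d l} \<inter> {c m<..<d m} = {}"
      using pairwiseD[OF packed \<open>l \<in> K\<close> \<open>m \<in> K\<close> \<open>l \<noteq> m\<close>] by blast
  qed
  have "card {l \<in> K. snd u \<in> {c l..d l}} \<le> 2"
    using nondegenerate disjoint by (rule card_atLeastAtMost_containing_le_2)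
  moreover have "{l \<in> K. snd u \<in> {c l..d l}} = K"
    using u by (auto simp: mem_Times_iff)
  ultimately show ?thesis
    by simp
qed

lemma unique_common_point_of_rectangle_clique:
  fixes a b c d :: "'i \<Rightarrow> real"
  assumes nondegenerate: "\<And>l. l \<in> K \<Longrightarrow> a l < b l \<and> c l < d l"
    and packing: "pairwise (\<lambda>l m. interior ({a l..b l} \<times> {c l..d l}) \<inter> interior ({a m..b m} \<times> {c m..d m}) = {}) K"
    and clique: "pairwise (\<lambda>l m. {a l..b l} \<times> {c l..d l} \<inter> {a m..b m} \<times> {c m..d m} \<noteq> {}) K"
    and "card K \<ge> 3"
  shows "\<exists>!z. z \<in> (\<Inter>l\<in>K. {a l..b l} \<times> {c l..d l})"
proof -
  have "finite K" "K \<noteq> {}"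
    using \<open>card K \<ge> 3\<close> card.infinite by fastforce+
  have meet: "{a l..b l} \<inter> {a m..b m} \<noteq> {} \<and> {c l..d l} \<inter> {c m..d m} \<noteq> {}"
    if "l \<in> K" "m \<in> K" for l m
  proof (cases "l = m")
    case True
    then show ?thesis using nondegenerate[OF that(1)] by auto
  next
    case False
    then show ?thesis using pairwiseD[OF clique that False] by (simp add: Times_Int_Times)
  qed
  have "(Max (a ` K), Max (c ` K)) \<in> (\<Inter>l\<in>K. {a l..b l} \<times> {c l..d l})"
    using Max_in_Inter_atLeastAtMost[of K a b] Max_in_Inter_atLeastAtMost[of K c d]
      \<open>finite K\<close> \<open>K \<noteq> {}\<close> meet by blast
  moreover have "u = v"
    if u: "u \<in> (\<Inter>l\<in>K. {a l..b l} \<times> {c l..d l})" and v: "v \<in> (\<Inter>l\<in>K. {a l..b l} \<times> {c l..d l})"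
    for u v
  proof (rule prod_eqI; rule ccontr)
    have "pairwise (\<lambda>l m. {a l<..<b l} \<inter> {a m<..<b m} = {} \<or> {c l<..<d l} \<inter> {c m<..<d m} = {}) K"
      using packing by (simp add: interior_Times Times_Int_Times)
    moreover assume "fst u \<noteq> fst v"
    ultimately have "card K \<le> 2"
      using nondegenerate by (intro card_le_2_if_common_points_differ_in_fst[OF _ _ u v]) auto
    then show False using \<open>card K \<ge> 3\<close> by simp
  next
    have packed: "pairwise (\<lambda>l m. {c l<..<d l} \<inter> {c m<..<d m} = {} \<or> {a l<..<b l} \<inter> {a m<..<b m} = {}) K"
      using packing by (simp add: interior_Times Times_Int_Times disj_commute)
    have swapped: "prod.swap u \<in> (\<Inter>l\<in>K. {c l..d l} \<times> {a l..b l})"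
      "prod.swap v \<in> (\<Inter>l\<in>K. {c l..d l} \<times> {a l..b l})"
      using u v by (auto simp: mem_Times_iff)
    assume "snd u \<noteq> snd v"
    then have "card K \<le> 2"
      using nondegenerate by (intro card_le_2_if_common_points_differ_in_fst[OF _ packed swapped]) auto
    then show False
      using \<open>card K \<ge> 3\<close> by simp
  qed
  ultimately show ?thesis
    by blast
qed

lemma unique_common_point_of_packing_clique:
  assumes "homothetic_packing n r p" "K \<subseteq> {1..n}" "card K \<ge> 3"
    and clique: "pairwise (\<lambda>l m. hsquare (r l) (p l) \<inter> hsquare (r m) (p m) \<noteq> {}) K"
  shows "\<exists>!z. z \<in> (\<Inter>l\<in>K. hsquare (r l) (p l))"
proof -
  have pos: "r l > 0" if "l \<in> K" for l
    using assms(1,2) that unfolding homothetic_packing_def by blast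
  let ?R = "\<lambda>l. {fst (p l) - r l..fst (p l) + r l} \<times> {snd (p l) - r l..snd (p l) + r l}"
  have square: "hsquare (r l) (p l) = ?R l" if "l \<in> K" for l
    using hsquare_eq_Times pos[OF that] by simp
  have "pairwise (\<lambda>l m. interior (hsquare (r l) (p l)) \<inter> interior (hsquare (r m) (p m)) = {}) K"
    using assms(1,2) unfolding homothetic_packing_def pairwise_def by blast
  then have "pairwise (\<lambda>l m. interior (?R l) \<inter> interior (?R m) = {}) K"
    by (simp add: pairwise_def square)
  moreover have "pairwise (\<lambda>l m. ?R l \<inter> ?R m \<noteq> {}) K"
    using clique by (simp add: pairwise_def square)
  moreover have "fst (p l) - r l < fst (p l) + r l \<and> snd (p l) - r l < snd (p l) + r l" if "l \<in> K" for l
    using pos[OF that] by simp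
  ultimately have "\<exists>!z. z \<in> (\<Inter>l\<in>K. ?R l)"
    using \<open>card K \<ge> 3\<close> by (intro unique_common_point_of_rectangle_clique) simp_all
  moreover have "(\<Inter>l\<in>K. hsquare (r l) (p l)) = (\<Inter>l\<in>K. ?R l)"
    using square by simp
  ultimately show ?thesis
    by simp
qed

theorem lemma8:
  fixes n :: nat and r :: "nat \<Rightarrow> real" and p :: "nat \<Rightarrow> real \<times> real" and i j k :: nat
  assumes "homothetic_packing n r p"
    and "contact_edge n r p i j" and "contact_edge n r p j k" and "contact_edge n r p i k"
  shows "\<exists>!x. x \<in> hsquare (r i) (p i) \<inter> hsquare (r j) (p j) \<inter> hsquare (r k) (p k)"
proof -
  define K where "K = {i, j, k}"
  have "K \<subseteq> {1..n}" "card K = 3"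
    using assms(2-4) by (auto simp: K_def contact_edge_def)
  moreover have "pairwise (\<lambda>l m. hsquare (r l) (p l) \<inter> hsquare (r m) (p m) \<noteq> {}) K"
    using assms(2-4) unfolding pairwise_def K_def contact_edge_def by (auto simp: Int_commute)
  ultimately have "\<exists>!z. z \<in> (\<Inter>l\<in>K. hsquare (r l) (p l))"
    using assms(1) by (intro unique_common_point_of_packing_clique) auto
  then show ?thesis
    by (simp add: K_def Int_assoc)
qed

end
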